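(* Let $q=p^n$ with $p$ prime, $m\ge1$, and $r=t(q-1)+s$ with integers $t\ge0$, $0\le s\le q-2$, and $r<m(q-1)$. If $f$ is a nonzero codeword of $R_q(r,m)$ of minimal weight $(q-s)q^{m-t-1}$, then its support $S_f$ is contained in an affine subspace of $\mathbb{F}_q^m$ of codimension $t$.
   Context: $B_m^q=\mathbb{F}_q[X_1,\dots,X_m]/(X_1^q-X_1,\dots,X_m^q-X_m)$ is identified with the algebra of functions $\mathbb{F}_q^m\to\mathbb{F}_q$. For $f\in B_m^q$, $S_f=\{x : f(x)\neq0\}$ and $|f|=\mathrm{Card}(S_f)$. The degree of $P\in B_m^q$ is the total degree of its representative of degree at most $q-1$ in each variable, and $R_q(r,m)=\{P\in B_m^q:\deg P\le r\}$. The minimum weight of a nonzero codeword of $R_q(r,m)$, for $r=t(q-1)+s$, $0\le s\le q-2$, $r<m(q-1)$, is $(q-s)q^{m-t-1}$. *)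

theory Defs
  imports "HOL-Computational_Algebra.Primes" "HOL-Library.Cardinality"
begin

(* Points of F_q^m are functions 'm => 'a, with 'a a finite field (q = CARD('a))
   and 'm a finite index type (m = CARD('m)). Elements of B_m^q are functions
   ('m => 'a) => 'a. *)

definition reduced_exps :: "nat \<Rightarrow> nat \<Rightarrow> ('m::finite \<Rightarrow> nat) set" where
  "reduced_exps q r = {e. (\<forall>i. e i \<le> q - 1) \<and> (\<Sum>i\<in>UNIV. e i) \<le> r}"

definition RM :: "nat \<Rightarrow> (('m::finite \<Rightarrow> 'a::{finite,field}) \<Rightarrow> 'a) set" where
  "RM r = {f. \<exists>c :: ('m \<Rightarrow> nat) \<Rightarrow> 'a.
      \<forall>x. f x = (\<Sum>e\<in>reduced_exps (CARD('a)) r. c e * (\<Prod>i\<in>UNIV. x i ^ e i))}"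

definition support :: "(('m::finite \<Rightarrow> 'a::{finite,field}) \<Rightarrow> 'a) \<Rightarrow> ('m \<Rightarrow> 'a) set" where
  "support f = {x. f x \<noteq> 0}"

definition weight :: "(('m::finite \<Rightarrow> 'a::{finite,field}) \<Rightarrow> 'a) \<Rightarrow> nat" where
  "weight f = card (support f)"

definition affine_subspace_codim :: "nat \<Rightarrow> ('m::finite \<Rightarrow> 'a::{finite,field}) set \<Rightarrow> bool" where
  "affine_subspace_codim t A \<longleftrightarrow> t \<le> CARD('m) \<and>
     (\<exists>(a :: 'm \<Rightarrow> 'a) (v :: nat \<Rightarrow> 'm \<Rightarrow> 'a).
        (\<forall>c :: nat \<Rightarrow> 'a. (\<forall>i. (\<Sum>j<CARD('m) - t. c j * v j i) = 0)
              \<longrightarrow> (\<forall>j<CARD('m) - t. c j = 0)) \<and>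
        A = {x. \<exists>c :: nat \<Rightarrow> 'a. x = (\<lambda>i. a i + (\<Sum>j<CARD('m) - t. c j * v j i))})"

end

theory Submission
  imports Defs "HOL-Computational_Algebra.Polynomial"
begin

(* Points of F_q^k are represented as sequences vanishing from index k on (pts k), so that the
   number of variables can vary in an induction, and "polynomial function of degree \<le> r in
   k variables" is the inductive predicate poly_fun.  Writing f as a polynomial in the last
   variable, its leading coefficient g (of degree r - d) has weight at least the minimum
   weight for degree r - d, and every line above the support of g meets the support of f in at
   least q - d points.

   For f of minimum weight, after an affine change of coordinates moving two points of the
   support to 0 and e_k, the equality case of this count shows that d \<le> s, that g has minimum
   weight for degree r - d, and that f vanishes above the zeros of g.  Induction on the number
   of variables then puts the support of g in an affine subspace of dimension k - t and that of
   f in the cylinder over it (min_weight_support_in_flat). *)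

lemma card_field_ge2: "2 \<le> CARD('a::{finite,field})"
proof -
  have "card {0::'a, 1} \<le> CARD('a)" by (intro card_mono) auto
  thus ?thesis by simp
qed

lemma field_pow_card: "(y::'a::{finite,field}) ^ CARD('a) = y"
proof (cases "y = 0")
  case True
  then show ?thesis using card_field_ge2[where 'a='a] by simp
next
  case False
  let ?U = "UNIV - {0::'a}"
  have "prod (\<lambda>z. y * z) ?U = prod id ?U"
    by (rule prod.reindex_bij_witness[of _ "\<lambda>z. inverse y * z" "\<lambda>z. y * z"]) (use False in auto)
  moreover have "prod (\<lambda>z. y * z) ?U = y ^ card ?U * prod id ?U"
    by (simp add: prod.distrib)
  moreover have "prod id ?U \<noteq> 0" by simp
  ultimately have "y ^ card ?U = 1" by simp
  moreover have "card ?U = CARD('a) - 1" by (simp add: card_Diff_singleton)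
  moreover have "CARD('a) = Suc (CARD('a) - 1)" using card_field_ge2[where 'a='a] by simp
  ultimately show ?thesis by (metis mult.right_neutral power_Suc)
qed

(* Reduction of an exponent j to the representative in [1, q-1] (or 0) with the same
   power function y \<mapsto> y^j on F_q; it never increases the exponent. *)
definition reduce_exp :: "nat \<Rightarrow> nat \<Rightarrow> nat" where
  "reduce_exp q j = (if j = 0 then 0 else Suc ((j - 1) mod (q - 1)))"

lemma reduce_exp_le: "reduce_exp q j \<le> j"
  by (cases j) (auto simp: reduce_exp_def intro: le_trans[OF mod_less_eq_dividend])

lemma reduce_exp_less: "2 \<le> q \<Longrightarrow> reduce_exp q j < q"
proof (cases j)
  case (Suc j')
  assume "2 \<le> q"
  then have "j' mod (q - 1) < q - 1" by (intro mod_less_divisor) simp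
  then have "Suc (j' mod (q - 1)) < q" by linarith
  then show ?thesis using Suc by (simp add: reduce_exp_def)
qed (simp add: reduce_exp_def)

lemma pow_reduce_exp: "(y::'a::{finite,field}) ^ j = y ^ reduce_exp CARD('a) j"
proof (induction j rule: less_induct)
  case (less j)
  let ?q = "CARD('a)"
  have q2: "2 \<le> ?q" by (rule card_field_ge2)
  show ?case
  proof (cases "j < ?q")
    case True
    then show ?thesis by (cases j) (auto simp: reduce_exp_def)
  next
    case False
    define i where "i = j - (?q - 1)"
    have i: "j = i + (?q - 1)" "0 < i" "i < j" using False q2 unfolding i_def by auto
    have "y ^ j = y ^ (i - 1) * y ^ ?q"
      using i q2 by (simp add: power_add[symmetric])
    also have "\<dots> = y ^ i" using \<open>0 < i\<close> by (simp add: field_pow_card power_Suc2[symmetric])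
    also have "\<dots> = y ^ reduce_exp ?q i" using less i by blast
    also have "reduce_exp ?q i = reduce_exp ?q j"
    proof -
      have "j - 1 = (i - 1) + (?q - 1)" using i by linarith
      then have "(j - 1) mod (?q - 1) = (i - 1) mod (?q - 1)" by (metis mod_add_self2)
      then show ?thesis using i by (simp add: reduce_exp_def)
    qed
    finally show ?thesis .
  qed
qed

(* F_q^k embedded into sequences: the points whose coordinates vanish from index k on.
   Working with nat-indexed points lets the dimension k vary in an induction. *)
definition pts :: "nat \<Rightarrow> (nat \<Rightarrow> 'a::zero) set" where
  "pts k = {x. \<forall>i\<ge>k. x i = 0}"

lemma pts_0: "pts 0 = {\<lambda>_. 0}"
  by (auto simp: pts_def)

lemma bij_pts_Suc: "bij_betw (\<lambda>(x, y). x(k := y)) (pts k \<times> UNIV) (pts (Suc k))"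
proof (rule bij_betw_imageI)
  show "inj_on (\<lambda>(x, y). x(k := y)) (pts k \<times> UNIV)"
  proof (rule inj_onI)
    fix p p'
    assume p: "p \<in> pts k \<times> UNIV" and p': "p' \<in> pts k \<times> UNIV"
      and eq: "(\<lambda>(x, y). x(k := y)) p = (\<lambda>(x, y). x(k := y)) p'"
    obtain x y x' y' where xy: "p = (x, y)" "p' = (x', y')" by fastforce
    have "x i = x' i" for i
      using fun_cong[OF eq, of i] p p' xy by (cases "i = k") (auto simp: pts_def)
    then have "x = x'" by auto
    moreover have "y = y'" using fun_cong[OF eq, of k] xy by auto
    ultimately show "p = p'" using xy by auto
  qed
  show "(\<lambda>(x, y). x(k := y)) ` (pts k \<times> UNIV) = pts (Suc k)"
  proof (intro equalityI subsetI)
    fix z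
    assume "z \<in> pts (Suc k)"
    then have "(z(k := 0), z k) \<in> pts k \<times> UNIV" by (auto simp: pts_def)
    moreover have "z = (\<lambda>(x, y). x(k := y)) (z(k := 0), z k)" by simp
    ultimately show "z \<in> (\<lambda>(x, y). x(k := y)) ` (pts k \<times> UNIV)" by (rule rev_image_eqI)
  qed (auto simp: pts_def)
qed

lemma finite_pts: "finite (pts k :: (nat \<Rightarrow> 'a::{finite,zero}) set)"
proof (induction k)
  case 0
  then show ?case by (simp add: pts_0)
next
  case (Suc k)
  then show ?case using bij_betw_finite[OF bij_pts_Suc[where 'a='a, of k]] by simp
qed

inductive poly_fun :: "nat \<Rightarrow> nat \<Rightarrow> ((nat \<Rightarrow> 'a::comm_ring_1) \<Rightarrow> 'a) \<Rightarrow> bool" for k :: nat where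
  const: "poly_fun k r (\<lambda>_. c)"
| var: "i < k \<Longrightarrow> 1 \<le> r \<Longrightarrow> poly_fun k r (\<lambda>x. x i)"
| add: "poly_fun k r f \<Longrightarrow> poly_fun k r g \<Longrightarrow> poly_fun k r (\<lambda>x. f x + g x)"
| mult: "poly_fun k a f \<Longrightarrow> poly_fun k b g \<Longrightarrow> a + b \<le> r \<Longrightarrow> poly_fun k r (\<lambda>x. f x * g x)"

lemma poly_fun_mono: "poly_fun k a f \<Longrightarrow> a \<le> b \<Longrightarrow> poly_fun k b f"
  using poly_fun.mult[OF poly_fun.const[of k 0 1], of a f b] by simp

lemma poly_fun_local: "poly_fun k r f \<Longrightarrow> (\<forall>i<k. x i = y i) \<Longrightarrow> f x = f y"
  by (induction rule: poly_fun.induct) auto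

lemma poly_fun_sum: "(\<forall>e\<in>A. poly_fun k r (g e)) \<Longrightarrow> poly_fun k r (\<lambda>x. \<Sum>e\<in>A. g e x)"
proof (induction A rule: infinite_finite_induct)
  case (insert e A)
  then show ?case by (simp add: poly_fun.add)
qed (simp_all add: poly_fun.const)

lemma poly_fun_sum_list:
  "(\<forall>p\<in>set L. poly_fun k r (g p)) \<Longrightarrow> poly_fun k r (\<lambda>x. \<Sum>p\<leftarrow>L. g p x)"
  by (induction L) (simp_all add: poly_fun.const poly_fun.add)

lemma poly_fun_prod:
  "finite A \<Longrightarrow> (\<forall>e\<in>A. poly_fun k (d e) (g e)) \<Longrightarrow> poly_fun k (\<Sum>e\<in>A. d e) (\<lambda>x. \<Prod>e\<in>A. g e x)"
  by (induction A rule: finite_induct) (auto intro: poly_fun.const poly_fun.mult)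

lemma poly_fun_power: "i < k \<Longrightarrow> poly_fun k n (\<lambda>x. x i ^ n)"
proof (induction n)
  case 0
  then show ?case using poly_fun.const[of k 0 1] by simp
next
  case (Suc n)
  then show ?case using poly_fun.mult[OF poly_fun.var[of i k 1] Suc.IH, of "Suc n"] by simp
qed

lemma poly_fun_comp:
  "poly_fun k r f \<Longrightarrow> (\<forall>i<k. poly_fun k' 1 (\<lambda>y. \<phi> y i)) \<Longrightarrow> poly_fun k' r (\<lambda>y. f (\<phi> y))"
proof (induction rule: poly_fun.induct)
  case (var i r)
  then show ?case using poly_fun_mono by blast
qed (auto intro: poly_fun.intros)

lemma sum_list_mult:
  "(\<Sum>p\<leftarrow>xs. F p) * (\<Sum>q\<leftarrow>ys. G q) = (\<Sum>p\<leftarrow>xs. \<Sum>q\<leftarrow>ys. F p * G q)"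
  for F :: "'b \<Rightarrow> 'a::comm_ring_1"
  by (induction xs) (auto simp: distrib_right sum_list_const_mult)

lemma sum_list_map_concat:
  "(\<Sum>u\<leftarrow>concat (map g xs). h u) = (\<Sum>p\<leftarrow>xs. \<Sum>u\<leftarrow>g p. h u)"
  for h :: "'b \<Rightarrow> 'a::comm_ring_1"
  by (induction xs) auto

lemma sum_list_sum_swap:
  "(\<Sum>p\<leftarrow>L. \<Sum>n\<in>A. h p n) = (\<Sum>n\<in>A. \<Sum>p\<leftarrow>L. h p n)"
  for h :: "'b \<Rightarrow> 'c \<Rightarrow> 'a::comm_ring_1"
  by (induction L) (auto simp: sum.distrib)

definition last_expansion ::
    "nat \<Rightarrow> nat \<Rightarrow> ((nat \<Rightarrow> 'a::comm_ring_1) \<Rightarrow> 'a) \<Rightarrow> (nat \<times> ((nat \<Rightarrow> 'a) \<Rightarrow> 'a)) list \<Rightarrow> bool" where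
  "last_expansion k r f L \<longleftrightarrow>
     (\<forall>p\<in>set L. fst p \<le> r \<and> poly_fun k (r - fst p) (snd p)) \<and>
     (\<forall>x. f x = (\<Sum>p\<leftarrow>L. snd p x * x k ^ fst p))"

lemma last_expansion_mult:
  assumes L1: "last_expansion k a f L1" and L2: "last_expansion k b g L2" and r: "a + b \<le> r"
  shows "last_expansion k r (\<lambda>x. f x * g x)
           (concat (map (\<lambda>p. map (\<lambda>q. (fst p + fst q, \<lambda>x. snd p x * snd q x)) L2) L1))"
    (is "last_expansion k r _ ?L")
  unfolding last_expansion_def
proof (intro conjI allI ballI)
  fix u assume "u \<in> set ?L"
  then obtain p q where p: "p \<in> set L1" and q: "q \<in> set L2"
    and u: "u = (fst p + fst q, \<lambda>x. snd p x * snd q x)" by auto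
  have "fst p \<le> a" "fst q \<le> b" "poly_fun k (a - fst p) (snd p)" "poly_fun k (b - fst q) (snd q)"
    using p q L1 L2 unfolding last_expansion_def by auto
  moreover have "(a - fst p) + (b - fst q) \<le> r - (fst p + fst q)"
    using r calculation by linarith
  ultimately show "fst u \<le> r" and "poly_fun k (r - fst u) (snd u)"
    using u r by (auto intro: poly_fun.mult)
next
  fix x :: "nat \<Rightarrow> 'a"
  have "f x * g x = (\<Sum>p\<leftarrow>L1. snd p x * x k ^ fst p) * (\<Sum>p\<leftarrow>L2. snd p x * x k ^ fst p)"
    using L1 L2 unfolding last_expansion_def by simp
  also have "\<dots> = (\<Sum>p\<leftarrow>?L. snd p x * x k ^ fst p)"
    unfolding sum_list_mult sum_list_map_concat by (simp add: o_def power_add ac_simps)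
  finally show "f x * g x = (\<Sum>p\<leftarrow>?L. snd p x * x k ^ fst p)" .
qed

lemma poly_fun_expand_last:
  "poly_fun (Suc k) r f \<Longrightarrow> \<exists>L. last_expansion k r f L"
proof (induction rule: poly_fun.induct)
  case (const r c)
  show ?case
    by (rule exI[of _ "[(0, \<lambda>_. c)]"]) (auto simp: last_expansion_def intro: poly_fun.const)
next
  case (var i r)
  show ?case
  proof (cases "i = k")
    case True
    show ?thesis by (rule exI[of _ "[(1, \<lambda>_. 1)]"])
      (use var True in \<open>auto simp: last_expansion_def intro: poly_fun.const\<close>)
  next
    case False
    show ?thesis by (rule exI[of _ "[(0, \<lambda>x. x i)]"])
      (use var False in \<open>auto simp: last_expansion_def intro: poly_fun.var\<close>)
  qed
next
  case (add r f g)
  then obtain L1 L2 where "last_expansion k r f L1" "last_expansion k r g L2" by blast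
  then show ?case by (intro exI[of _ "L1 @ L2"]) (auto simp: last_expansion_def)
next
  case (mult a f b g r)
  then show ?case using last_expansion_mult by blast
qed

lemma sum_delta_mult: "j < N \<Longrightarrow> (\<Sum>n<N. (if j = n then v else 0) * w n) = v * w j"
  for v :: "'a::comm_ring_1" and N :: nat
  by (simp add: if_distrib[of "\<lambda>c. c * _"] cong: if_cong)

lemma sum_list_group_exponents:
  fixes y :: "'a::{finite,field}"
  shows "(\<Sum>p\<leftarrow>L. a p * y ^ e p) =
    (\<Sum>n<CARD('a). (\<Sum>p\<leftarrow>L. if reduce_exp CARD('a) (e p) = n then a p else 0) * y ^ n)"
proof -
  have q2: "2 \<le> CARD('a)" by (rule card_field_ge2)
  have "(\<Sum>p\<leftarrow>L. a p * y ^ e p) = (\<Sum>p\<leftarrow>L. a p * y ^ reduce_exp CARD('a) (e p))"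
    using pow_reduce_exp[of y] by simp
  also have "\<dots> = (\<Sum>p\<leftarrow>L. \<Sum>n<CARD('a). (if reduce_exp CARD('a) (e p) = n then a p else 0) * y ^ n)"
    by (simp add: sum_delta_mult reduce_exp_less[OF q2])
  finally show ?thesis unfolding sum_list_sum_swap by (simp add: sum_list_mult_const)
qed

(* The expansion with exponents reduced below q (using y^q = y): one coefficient G n for
   each exponent n < q, of degree \<le> r - n, and G n = 0 for n > r. *)
lemma poly_fun_coeffs_last:
  fixes f :: "(nat \<Rightarrow> 'a::{finite,field}) \<Rightarrow> 'a"
  assumes "poly_fun (Suc k) r f"
  obtains G where "\<And>n. poly_fun k (r - n) (G n)" and "\<And>n. r < n \<Longrightarrow> G n = (\<lambda>_. 0)"
    and "\<And>x. f x = (\<Sum>n<CARD('a). G n x * x k ^ n)"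
proof -
  let ?q = "CARD('a)"
  obtain L where L1: "\<forall>p\<in>set L. fst p \<le> r \<and> poly_fun k (r - fst p) (snd p)"
    and L2: "\<forall>x. f x = (\<Sum>p\<leftarrow>L. snd p x * x k ^ fst p)"
    using poly_fun_expand_last[OF assms] unfolding last_expansion_def by blast
  define G where "G n = (\<lambda>x. \<Sum>p\<leftarrow>L. if reduce_exp ?q (fst p) = n then snd p x else 0)" for n
  have "poly_fun k (r - n) (G n)" for n
    unfolding G_def
  proof (rule poly_fun_sum_list, intro ballI)
    fix p assume p: "p \<in> set L"
    show "poly_fun k (r - n) (\<lambda>x. if reduce_exp ?q (fst p) = n then snd p x else 0)"
    proof (cases "reduce_exp ?q (fst p) = n")
      case True
      then have "n \<le> fst p" using reduce_exp_le[of ?q "fst p"] by simp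
      then have "poly_fun k (r - n) (snd p)"
        using L1 p poly_fun_mono[of k "r - fst p" "snd p" "r - n"] by auto
      then show ?thesis using True by simp
    qed (simp add: poly_fun.const)
  qed
  moreover have "G n = (\<lambda>_. 0)" if "r < n" for n
  proof -
    have "reduce_exp ?q (fst p) \<noteq> n" if "p \<in> set L" for p
      using reduce_exp_le[of ?q "fst p"] L1 that \<open>r < n\<close> by fastforce
    then show ?thesis unfolding G_def by (intro ext) (simp cong: map_cong)
  qed
  moreover have "f x = (\<Sum>n<?q. G n x * x k ^ n)" for x
    unfolding G_def using L2 sum_list_group_exponents[of "\<lambda>p. snd p x" "x k" "\<lambda>p. fst p" L] by simp
  ultimately show ?thesis using that by blast
qed

definition supp :: "nat \<Rightarrow> ((nat \<Rightarrow> 'a::zero) \<Rightarrow> 'a) \<Rightarrow> (nat \<Rightarrow> 'a) set" where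
  "supp k f = {x \<in> pts k. f x \<noteq> 0}"

definition wt :: "nat \<Rightarrow> ((nat \<Rightarrow> 'a::zero) \<Rightarrow> 'a) \<Rightarrow> nat" where
  "wt k f = card (supp k f)"

definition fib :: "((nat \<Rightarrow> 'a::zero) \<Rightarrow> 'a) \<Rightarrow> nat \<Rightarrow> (nat \<Rightarrow> 'a) \<Rightarrow> nat" where
  "fib f k x = card {y. f (x(k := y)) \<noteq> 0}"

lemma finite_supp: "finite (supp k (f :: (nat \<Rightarrow> 'a::{finite,zero}) \<Rightarrow> 'a))"
  unfolding supp_def by (rule finite_subset[OF _ finite_pts]) auto

lemma wt_Suc: "wt (Suc k) (f :: (nat \<Rightarrow> 'a::{finite,zero}) \<Rightarrow> 'a) = (\<Sum>x\<in>pts k. fib f k x)"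
proof -
  let ?S = "Sigma (pts k) (\<lambda>x. {y. f (x(k := y)) \<noteq> 0})"
  have "(\<lambda>(x, y). x(k := y)) ` ?S = supp (Suc k) f"
  proof (intro equalityI subsetI)
    fix z
    assume z: "z \<in> supp (Suc k) f"
    then have "(z(k := 0), z k) \<in> ?S" by (auto simp: supp_def pts_def)
    then show "z \<in> (\<lambda>(x, y). x(k := y)) ` ?S" by (rule rev_image_eqI) simp
  qed (auto simp: supp_def pts_def)
  then have "bij_betw (\<lambda>(x, y). x(k := y)) ?S (supp (Suc k) f)"
    by (intro bij_betw_subset[OF bij_pts_Suc]) auto
  then have "wt (Suc k) f = card ?S" unfolding wt_def by (simp add: bij_betw_same_card)
  also have "\<dots> = (\<Sum>x\<in>pts k. fib f k x)" unfolding fib_def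
    by (rule card_SigmaI) (auto simp: finite_pts)
  finally show ?thesis .
qed

lemma wt_Suc_split:
  "wt (Suc k) (f :: (nat \<Rightarrow> 'a::{finite,zero}) \<Rightarrow> 'a) =
     (\<Sum>x\<in>supp k g. fib f k x) + (\<Sum>x\<in>pts k - supp k g. fib f k x)"
  unfolding wt_Suc using sum.subset_diff[of "supp k g" "pts k" "fib f k"]
  by (simp add: supp_def finite_pts add.commute)

lemma fibre_count:
  fixes f :: "(nat \<Rightarrow> 'a::{finite,zero}) \<Rightarrow> 'a"
  assumes "\<forall>x\<in>supp k g. c \<le> fib f k x"
  shows "c * wt k g + (\<Sum>x\<in>pts k - supp k g. fib f k x) \<le> wt (Suc k) f"
proof -
  have "c * wt k g = (\<Sum>x\<in>supp k g. c)" unfolding wt_def by simp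
  also have "\<dots> \<le> (\<Sum>x\<in>supp k g. fib f k x)" using assms by (intro sum_mono) auto
  finally have "c * wt k g \<le> (\<Sum>x\<in>supp k g. fib f k x)" .
  moreover note wt_Suc_split[of k f g]
  ultimately show ?thesis by linarith
qed

lemma fibre_count_tight:
  fixes f :: "(nat \<Rightarrow> 'a::{finite,zero}) \<Rightarrow> 'a"
  assumes fb: "\<forall>x\<in>supp k g. c \<le> fib f k x" and tight: "wt (Suc k) f \<le> c * wt k g"
  shows "\<forall>x\<in>pts k - supp k g. fib f k x = 0" and "\<forall>x\<in>supp k g. fib f k x = c"
proof -
  have fin: "finite (pts k - supp k g)" by (simp add: finite_pts)
  have "(\<Sum>x\<in>pts k - supp k g. fib f k x) = 0" using fibre_count[OF fb] tight by linarith
  then show "\<forall>x\<in>pts k - supp k g. fib f k x = 0" using sum_eq_0_iff[OF fin] by blast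
  show "\<forall>x\<in>supp k g. fib f k x = c"
  proof (rule ccontr)
    assume "\<not> (\<forall>x\<in>supp k g. fib f k x = c)"
    then have "(\<Sum>x\<in>supp k g. c) < (\<Sum>x\<in>supp k g. fib f k x)"
      using fb by (intro sum_strict_mono_ex1) (auto simp: finite_supp le_less)
    moreover note wt_Suc_split[of k f g]
    ultimately show False using tight unfolding wt_def by (simp add: mult.commute)
  qed
qed

(* A nonzero polynomial of degree d < q in one variable vanishes at no more than d points of
   F_q, so it is nonzero at at least q - d points. *)
lemma nonroots_bound:
  fixes c :: "nat \<Rightarrow> 'a::{finite,field}"
  assumes d: "d < CARD('a)" and cd: "c d \<noteq> 0" and cz: "\<forall>n>d. c n = 0"
  shows "CARD('a) - d \<le> card {y::'a. (\<Sum>n<CARD('a). c n * y ^ n) \<noteq> 0}"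
proof -
  define p where "p = (\<Sum>n\<le>d. monom (c n) n)"
  have ev: "(\<Sum>n<CARD('a). c n * y ^ n) = poly p y" for y
  proof -
    have "(\<Sum>n<CARD('a). c n * y ^ n) = (\<Sum>n\<le>d. c n * y ^ n)"
      by (rule sum.mono_neutral_right) (use d cz in auto)
    then show ?thesis unfolding p_def by (simp add: poly_sum poly_monom)
  qed
  have "coeff p d = c d" unfolding p_def by (simp add: coeff_sum)
  then have p0: "p \<noteq> 0" using cd by auto
  have "degree p \<le> d"
    by (rule degree_le) (auto simp: p_def coeff_sum)
  then have roots: "card {y. poly p y = 0} \<le> d" using card_poly_roots_bound[OF p0] by simp
  have "{y. poly p y \<noteq> 0} = UNIV - {y. poly p y = 0}" by auto
  then have "card {y. poly p y \<noteq> 0} = CARD('a) - card {y. poly p y = 0}"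
    by (simp add: card_Diff_subset)
  then show ?thesis using roots ev by simp
qed

lemma fib_lower_bound:
  fixes f :: "(nat \<Rightarrow> 'a::{finite,field}) \<Rightarrow> 'a"
  assumes f: "\<And>y. f (x(k := y)) = (\<Sum>n<CARD('a). G n * y ^ n)"
    and d: "d < CARD('a)" and lead: "G d \<noteq> 0" and top: "\<And>n. d < n \<Longrightarrow> n < CARD('a) \<Longrightarrow> G n = 0"
  shows "CARD('a) - d \<le> fib f k x"
proof -
  define c where "c n = (if n < CARD('a) then G n else 0)" for n
  have "CARD('a) - d \<le> card {y::'a. (\<Sum>n<CARD('a). c n * y ^ n) \<noteq> 0}"
    by (rule nonroots_bound[OF d]) (use d lead top in \<open>auto simp: c_def\<close>)
  also have "{y::'a. (\<Sum>n<CARD('a). c n * y ^ n) \<noteq> 0} = {y. f (x(k := y)) \<noteq> 0}"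
    unfolding f c_def by simp
  finally show ?thesis unfolding fib_def .
qed

(* The minimum weight of the Reed-Muller code of order r in k variables: with r = t(q-1) + s,
   0 \<le> s < q-1, it is (q-s)q^(k-t-1) for t < k and 1 otherwise. *)
definition min_wt :: "nat \<Rightarrow> nat \<Rightarrow> nat \<Rightarrow> nat" where
  "min_wt q k r =
     (if k * (q - 1) \<le> r then 1 else (q - r mod (q - 1)) * q ^ (k - r div (q - 1) - 1))"

lemma min_wt_eq:
  assumes s: "s < q - 1"
  shows "min_wt q k (t * (q - 1) + s) = (if k \<le> t then 1 else (q - s) * q ^ (k - t - 1))"
proof -
  have "k * (q - 1) \<le> t * (q - 1) + s \<longleftrightarrow> k \<le> t"
  proof
    assume h: "k * (q - 1) \<le> t * (q - 1) + s"
    show "k \<le> t"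
    proof (rule ccontr)
      assume "\<not> k \<le> t"
      then have "Suc t * (q - 1) \<le> k * (q - 1)" by (intro mult_le_mono1) simp
      then show False using h s by simp
    qed
  qed (simp add: trans_le_add1)
  moreover have "(t * (q - 1) + s) mod (q - 1) = s" and "(t * (q - 1) + s) div (q - 1) = t"
    using s by simp_all
  ultimately show ?thesis unfolding min_wt_def by simp
qed

lemma min_wt_step_arith_low: "d \<le> s \<Longrightarrow> s < q \<Longrightarrow> (q - s) * q \<le> (q - d) * (q - (s - d))"
  for d s q :: nat
proof -
  assume "d \<le> s" "s < q"
  define e f where "e = s - d" and "f = q - s"
  then have "s = d + e" "q = s + f" using \<open>d \<le> s\<close> \<open>s < q\<close> by auto
  then show ?thesis by (simp add: algebra_simps)
qed

lemma min_wt_step_arith_high: "s < d \<Longrightarrow> d < q \<Longrightarrow> q - s \<le> (q - d) * Suc (d - s)"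
  and min_wt_step_arith_high_strict: "s < d \<Longrightarrow> d + 2 \<le> q \<Longrightarrow> q - s < (q - d) * Suc (d - s)"
  for d s q :: nat
proof -
  assume "s < d" "d < q"
  define e g where "e = d - s - 1" and "g = q - d - 1"
  then have "d = s + e + 1" "q = d + g + 1" using \<open>s < d\<close> \<open>d < q\<close> by auto
  then show "q - s \<le> (q - d) * Suc (d - s)" by (simp add: algebra_simps)
next
  assume "s < d" "d + 2 \<le> q"
  define e g where "e = d - s - 1" and "g = q - d - 2"
  then have "d = s + e + 1" "q = d + g + 2" using \<open>s < d\<close> \<open>d + 2 \<le> q\<close> by auto
  then show "q - s < (q - d) * Suc (d - s)" by (simp add: algebra_simps)
qed

lemma min_wt_step_low:
  assumes s: "s < q - 1" and ds: "d \<le> s"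
  shows "min_wt q (Suc k) (t * (q - 1) + s) \<le> (q - d) * min_wt q k (t * (q - 1) + s - d)"
proof -
  have r': "t * (q - 1) + s - d = t * (q - 1) + (s - d)" using ds by simp
  have mw1: "min_wt q (Suc k) (t * (q - 1) + s) = (if Suc k \<le> t then 1 else (q - s) * q ^ (k - t))"
    using min_wt_eq[OF s] by simp
  have mw2: "min_wt q k (t * (q - 1) + s - d) = (if k \<le> t then 1 else (q - (s - d)) * q ^ (k - t - 1))"
    unfolding r' using min_wt_eq[of "s - d" q] s by simp
  consider "Suc k \<le> t" | "k = t" | "t < k" by linarith
  then show ?thesis
  proof cases
    case 3
    then have "min_wt q (Suc k) (t * (q - 1) + s) = (q - s) * q * q ^ (k - t - 1)"
      using mw1 by (simp add: power_Suc[symmetric] Suc_diff_Suc)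
    also have "\<dots> \<le> (q - d) * (q - (s - d)) * q ^ (k - t - 1)"
      using min_wt_step_arith_low[OF ds, of q] s by (intro mult_le_mono1) simp
    finally show ?thesis using mw2 3 by simp
  qed (use mw1 mw2 ds s in auto)
qed

lemma min_wt_step_high:
  assumes q: "2 \<le> q" and s: "s < q - 1" and sd: "s < d" and d: "d < q"
  shows "min_wt q (Suc k) (Suc t * (q - 1) + s) \<le> (q - d) * min_wt q k (Suc t * (q - 1) + s - d)"
    and "d + 2 \<le> q \<Longrightarrow> t < k \<Longrightarrow>
      min_wt q (Suc k) (Suc t * (q - 1) + s) < (q - d) * min_wt q k (Suc t * (q - 1) + s - d)"
proof -
  have r': "Suc t * (q - 1) + s - d = t * (q - 1) + (q - 1 + s - d)" using d sd by simp
  have mw1: "min_wt q (Suc k) (Suc t * (q - 1) + s) = (if k \<le> t then 1 else (q - s) * q ^ (k - Suc t))"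
    using min_wt_eq[OF s, of "Suc k" "Suc t"] by simp
  have mw2: "min_wt q k (Suc t * (q - 1) + s - d) = (if k \<le> t then 1 else Suc (d - s) * q ^ (k - Suc t))"
  proof -
    define s' where "s' = q - 1 + s - d"
    have s': "s' < q - 1" "q - s' = Suc (d - s)" using sd d unfolding s'_def by auto
    have "min_wt q k (t * (q - 1) + s') = (if k \<le> t then 1 else (q - s') * q ^ (k - t - 1))"
      by (rule min_wt_eq[OF s'(1)])
    then show ?thesis unfolding r' s'_def[symmetric] s'(2) by simp
  qed
  show "min_wt q (Suc k) (Suc t * (q - 1) + s) \<le> (q - d) * min_wt q k (Suc t * (q - 1) + s - d)"
  proof (cases "k \<le> t")
    case True
    then show ?thesis using mw1 mw2 d by simp
  next
    case False
    have "(q - s) * q ^ (k - Suc t) \<le> (q - d) * Suc (d - s) * q ^ (k - Suc t)"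
      using min_wt_step_arith_high[OF sd d] by (rule mult_le_mono1)
    then show ?thesis by (simp only: mw1 mw2 if_not_P[OF False] mult.assoc)
  qed
  show "min_wt q (Suc k) (Suc t * (q - 1) + s) < (q - d) * min_wt q k (Suc t * (q - 1) + s - d)"
    if "d + 2 \<le> q" and "t < k"
  proof -
    have "(q - s) * q ^ (k - Suc t) < (q - d) * Suc (d - s) * q ^ (k - Suc t)"
      using min_wt_step_arith_high_strict[OF sd \<open>d + 2 \<le> q\<close>] q by (intro mult_less_mono1) simp_all
    moreover have "\<not> k \<le> t" using \<open>t < k\<close> by simp
    ultimately show ?thesis by (simp only: mw1 mw2 if_not_P if_False mult.assoc)
  qed
qed

lemma min_wt_step:
  assumes q: "2 \<le> q" and s: "s < q - 1" and r: "r = t * (q - 1) + s" and d: "d < q" and dr: "d \<le> r"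
  shows "min_wt q (Suc k) r \<le> (q - d) * min_wt q k (r - d)"
proof (cases "d \<le> s")
  case True
  then show ?thesis using min_wt_step_low[OF s] r by simp
next
  case False
  then obtain t' where "t = Suc t'" using r dr by (cases t) auto
  then show ?thesis using min_wt_step_high(1)[OF q s _ d] False r by simp
qed

(* Write f as a polynomial in the last variable and take the highest exponent d < q whose
   coefficient g is not identically zero: above every point of the support of g the
   restriction of f to the line is a polynomial of degree exactly d, so it is nonzero at at
   least q - d points. *)
lemma leading_coeff_decomposition:
  fixes f :: "(nat \<Rightarrow> 'a::{finite,field}) \<Rightarrow> 'a"
  assumes f: "poly_fun (Suc k) r f" and nz: "supp (Suc k) f \<noteq> {}"
  obtains d g where "d < CARD('a)" "d \<le> r" "poly_fun k (r - d) g" "supp k g \<noteq> {}"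
    "\<forall>x\<in>supp k g. CARD('a) - d \<le> fib f k x"
proof -
  let ?q = "CARD('a)"
  obtain G where G1: "\<And>n. poly_fun k (r - n) (G n)" and G2: "\<And>n. r < n \<Longrightarrow> G n = (\<lambda>_. 0)"
    and G3: "\<And>x. f x = (\<Sum>n<?q. G n x * x k ^ n)"
    using poly_fun_coeffs_last[OF f] by blast
  have loc: "G n (x(k := y)) = G n x" for n x y
    by (rule poly_fun_local[OF G1]) auto
  define D where "D = {n. n < ?q \<and> supp k (G n) \<noteq> {}}"
  obtain x0 where x0: "x0 \<in> pts (Suc k)" "f x0 \<noteq> 0" using nz by (auto simp: supp_def)
  have "D \<noteq> {}"
  proof -
    obtain n where n: "n < ?q" "G n x0 \<noteq> 0"
      using G3[of x0] x0(2) by (metis (no_types, lifting) mult_zero_left sum.neutral lessThan_iff)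
    have "x0(k := 0) \<in> supp k (G n)"
      using x0 n loc[of n x0 0] by (auto simp: supp_def pts_def)
    then show ?thesis using n unfolding D_def by blast
  qed
  define d where "d = Max D"
  have finD: "finite D" unfolding D_def by simp
  have dD: "d \<in> D" unfolding d_def using finD \<open>D \<noteq> {}\<close> by (rule Max_in)
  have dmax: "n \<in> D \<Longrightarrow> n \<le> d" for n unfolding d_def using finD by simp
  have dq: "d < ?q" and gnz: "supp k (G d) \<noteq> {}" using dD unfolding D_def by auto
  have dr: "d \<le> r"
    using gnz G2[of d] by (cases "d \<le> r") (auto simp: supp_def)
  have "?q - d \<le> fib f k x" if x: "x \<in> supp k (G d)" for x
  proof (rule fib_lower_bound[where G="\<lambda>n. G n x", OF _ dq])
    show "f (x(k := y)) = (\<Sum>n<?q. G n x * y ^ n)" for y using G3 by (simp add: loc)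
    show "G d x \<noteq> 0" using x by (simp add: supp_def)
    show "G n x = 0" if "d < n" "n < ?q" for n
      using dmax[of n] that x unfolding D_def supp_def by auto
  qed
  then show ?thesis using that dq dr G1 gnz by blast
qed

theorem min_weight_bound:
  fixes f :: "(nat \<Rightarrow> 'a::{finite,field}) \<Rightarrow> 'a"
  shows "poly_fun k r f \<Longrightarrow> supp k f \<noteq> {} \<Longrightarrow> min_wt CARD('a) k r \<le> wt k f"
proof (induction k arbitrary: r f)
  case 0
  then have "supp 0 f = {\<lambda>_. 0}" by (auto simp: supp_def pts_0)
  then show ?case unfolding wt_def min_wt_def by simp
next
  case (Suc k)
  let ?q = "CARD('a)"
  obtain d g where d: "d < ?q" "d \<le> r" and g: "poly_fun k (r - d) g" "supp k g \<noteq> {}"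
    and fb: "\<forall>x\<in>supp k g. ?q - d \<le> fib f k x"
    using leading_coeff_decomposition[OF Suc.prems] by blast
  have s: "r mod (?q - 1) < ?q - 1" using card_field_ge2[where 'a='a] by simp
  have "min_wt ?q (Suc k) r \<le> (?q - d) * min_wt ?q k (r - d)"
    using min_wt_step[OF card_field_ge2 s _ d] div_mult_mod_eq[of r "?q - 1"] by metis
  also have "\<dots> \<le> (?q - d) * wt k g" using Suc.IH[OF g] by simp
  also have "\<dots> \<le> wt (Suc k) f" using fibre_count[OF fb] by simp
  finally show ?case .
qed

definition indep :: "nat \<Rightarrow> (nat \<Rightarrow> nat \<Rightarrow> 'a::comm_ring_1) \<Rightarrow> bool" where
  "indep n v \<longleftrightarrow> (\<forall>c. (\<forall>i. (\<Sum>j<n. c j * v j i) = 0) \<longrightarrow> (\<forall>j<n. c j = 0))"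

definition aff :: "(nat \<Rightarrow> 'a::comm_ring_1) \<Rightarrow> (nat \<Rightarrow> nat \<Rightarrow> 'a) \<Rightarrow> nat \<Rightarrow> (nat \<Rightarrow> 'a) set" where
  "aff a v n = {x. \<exists>c. x = (\<lambda>i. a i + (\<Sum>j<n. c j * v j i))}"

definition in_flat :: "nat \<Rightarrow> nat \<Rightarrow> (nat \<Rightarrow> 'a::comm_ring_1) set \<Rightarrow> bool" where
  "in_flat k n S \<longleftrightarrow> (\<exists>a v. a \<in> pts k \<and> (\<forall>j. v j \<in> pts k) \<and> indep n v \<and> S \<subseteq> aff a v n)"

lemma in_flat_singleton: "p \<in> pts k \<Longrightarrow> S \<subseteq> {p} \<Longrightarrow> in_flat k 0 S"
  unfolding in_flat_def by (rule exI[of _ p], rule exI[of _ "\<lambda>_ _. 0"]) (auto simp: pts_def indep_def aff_def)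

lemma sum_upd_last:
  "(\<Sum>j<Suc n. c j * (v(n := w)) j i) = (\<Sum>j<n. c j * v j i) + c n * w i"
  for c :: "nat \<Rightarrow> 'a::comm_ring_1"
proof -
  have "(\<Sum>j<n. c j * (v(n := w)) j i) = (\<Sum>j<n. c j * v j i)" by (intro sum.cong) auto
  then show ?thesis by simp
qed

lemma indep_extend:
  assumes v: "\<forall>j. v j \<in> pts k" and ind: "indep n v"
  shows "indep (Suc n) (v(n := (\<lambda>_. 0)(k := 1)))"
  unfolding indep_def
proof (intro allI impI)
  fix c j
  assume h: "\<forall>i. (\<Sum>j<Suc n. c j * (v(n := (\<lambda>_. 0)(k := 1))) j i) = 0" and j: "j < Suc n"
  have sum_v: "(\<Sum>j<Suc n. c j * (v(n := (\<lambda>_. 0)(k := 1))) j i) =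
      (\<Sum>j<n. c j * v j i) + (if i = k then c n else 0)" for i
    unfolding sum_upd_last by simp
  have "c n = 0" using h[rule_format, of k] v unfolding sum_v by (simp add: pts_def)
  moreover have "\<forall>i. (\<Sum>j<n. c j * v j i) = 0"
  proof
    fix i
    show "(\<Sum>j<n. c j * v j i) = 0" using h[rule_format, of i] \<open>c n = 0\<close> sum_v[of i] by simp
  qed
  then have "\<forall>j<n. c j = 0" using ind unfolding indep_def by blast
  ultimately show "c j = 0" using j less_Suc_eq by auto
qed

lemma in_flat_cylinder:
  fixes f g :: "(nat \<Rightarrow> 'a::{finite,field}) \<Rightarrow> 'a"
  assumes flat: "in_flat k n (supp k g)" and fib0: "\<forall>x\<in>pts k - supp k g. fib f k x = 0"
  shows "in_flat (Suc k) (Suc n) (supp (Suc k) f)"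
proof -
  obtain a v where a: "a \<in> pts k" and v: "\<forall>j. v j \<in> pts k" and ind: "indep n v"
    and sub: "supp k g \<subseteq> aff a v n"
    using flat unfolding in_flat_def by blast
  define v' where "v' = v(n := (\<lambda>_. 0)(k := 1))"
  have "supp (Suc k) f \<subseteq> aff a v' (Suc n)"
  proof
    fix x assume x: "x \<in> supp (Suc k) f"
    define x' where "x' = x(k := 0)"
    have x': "x' \<in> pts k" and xx: "x'(k := x k) = x" using x unfolding x'_def by (auto simp: supp_def pts_def)
    have "x k \<in> {y. f (x'(k := y)) \<noteq> 0}" using x xx by (simp add: supp_def)
    then have "fib f k x' \<noteq> 0" unfolding fib_def by (auto simp: card_eq_0_iff)
    then have "x' \<in> supp k g" using fib0 x' by (meson DiffI)
    then obtain c where c: "x' = (\<lambda>i. a i + (\<Sum>j<n. c j * v j i))" using sub unfolding aff_def by blast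
    have "x i = a i + (\<Sum>j<Suc n. (c(n := x k)) j * v' j i)" for i
    proof -
      have "(\<Sum>j<Suc n. (c(n := x k)) j * v' j i) = (\<Sum>j<n. c j * v j i) + (if i = k then x k else 0)"
        unfolding v'_def sum_upd_last by simp
      moreover have "x' i = a i + (\<Sum>j<n. c j * v j i)" using c by simp
      ultimately show ?thesis using a v unfolding x'_def by (cases "i = k") (auto simp: pts_def)
    qed
    then show "x \<in> aff a v' (Suc n)" unfolding aff_def by blast
  qed
  moreover have "a \<in> pts (Suc k)" "\<forall>j. v' j \<in> pts (Suc k)"
    using a v unfolding v'_def by (auto simp: pts_def)
  ultimately show ?thesis unfolding in_flat_def v'_def using indep_extend[OF v ind] by blast
qed

(* The linear map of F_q^K exchanging the roles of coordinates i and k and sending e_k to u;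
   it is invertible when u_i \<noteq> 0.  Together with a translation it moves two given points of
   the support to 0 and e_k. *)
definition swap_idx :: "nat \<Rightarrow> nat \<Rightarrow> nat \<Rightarrow> nat" where
  "swap_idx i k n = (if n = i then k else if n = k then i else n)"

definition shear :: "nat \<Rightarrow> nat \<Rightarrow> (nat \<Rightarrow> 'a::comm_ring_1) \<Rightarrow> (nat \<Rightarrow> 'a) \<Rightarrow> nat \<Rightarrow> 'a" where
  "shear i k u y = (\<lambda>n. y (swap_idx i k n) + y k * (u n - (if n = i then 1 else 0)))"

lemma shear_linear:
  "shear i k u (\<lambda>n. b n + (\<Sum>j<N. c j * v j n)) m = shear i k u b m + (\<Sum>j<N. c j * shear i k u (v j) m)"
proof -
  have "\<And>W. b (swap_idx i k m) + (\<Sum>j<N. c j * v j (swap_idx i k m)) + (b k + (\<Sum>j<N. c j * v j k)) * W =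
     (b (swap_idx i k m) + b k * W) + (\<Sum>j<N. c j * (v j (swap_idx i k m) + v j k * W))"
    by (simp add: sum.distrib sum_distrib_right sum_distrib_left algebra_simps)
  then show ?thesis unfolding shear_def by simp
qed

lemma shear_diff: "shear i k u (\<lambda>n. y n - z n) m = shear i k u y m - shear i k u z m"
  by (simp add: shear_def algebra_simps)

lemma shear_0: "shear i k u (\<lambda>_. 0) = (\<lambda>_. 0)"
  by (simp add: shear_def)

lemma shear_sum: "shear i k u (\<lambda>n. \<Sum>j<N. c j * v j n) m = (\<Sum>j<N. c j * shear i k u (v j) m)"
  using shear_linear[where b="\<lambda>_. 0"] by (simp add: shear_0)

lemma shear_unit: "shear i k u ((\<lambda>_. 0)(k := 1)) = u"
  by (auto simp: shear_def swap_idx_def)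

lemma shear_pts: "y \<in> pts K \<Longrightarrow> u \<in> pts K \<Longrightarrow> i < K \<Longrightarrow> k < K \<Longrightarrow> shear i k u y \<in> pts K"
  by (auto simp: shear_def pts_def swap_idx_def)

lemma shear_eq_0:
  fixes u :: "nat \<Rightarrow> 'a::field"
  assumes ui: "u i \<noteq> 0" and z: "shear i k u y = (\<lambda>_. 0)"
  shows "y = (\<lambda>_. 0)"
proof
  fix n
  have "shear i k u y i = y k * u i" by (simp add: shear_def swap_idx_def algebra_simps)
  then have "y k = 0" using z ui by simp
  moreover have "swap_idx i k (swap_idx i k n) = n" by (simp add: swap_idx_def)
  ultimately have "shear i k u y (swap_idx i k n) = y n" by (simp add: shear_def)
  then show "y n = 0" using z by simp
qed

lemma poly_fun_shear:
  assumes "n < K" "i < K" "k < K"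
  shows "poly_fun K 1 (\<lambda>y. a n + shear i k u y n)"
proof -
  have "swap_idx i k n < K" using assms by (auto simp: swap_idx_def)
  then have "poly_fun K 1 (\<lambda>y. a n + (y (swap_idx i k n) + y k * (u n - (if n = i then 1 else 0))))"
    by (intro poly_fun.add poly_fun.const poly_fun.var poly_fun.mult[of K 1 _ 0] assms) simp_all
  then show ?thesis by (simp add: shear_def)
qed

lemma bij_affine_shear:
  fixes a u :: "nat \<Rightarrow> 'a::{finite,field}"
  assumes a: "a \<in> pts K" and u: "u \<in> pts K" and ik: "i < K" "k < K" and ui: "u i \<noteq> 0"
  shows "bij_betw (\<lambda>y n. a n + shear i k u y n) (pts K) (pts K)"
proof -
  let ?\<phi> = "\<lambda>y n. a n + shear i k u y n"
  have inj: "inj_on ?\<phi> (pts K)"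
  proof (rule inj_onI)
    fix y z assume "?\<phi> y = ?\<phi> z"
    then have "shear i k u (\<lambda>n. y n - z n) = (\<lambda>_. 0)"
      unfolding fun_eq_iff shear_diff by simp
    then have "(\<lambda>n. y n - z n) = (\<lambda>_. 0)" by (rule shear_eq_0[where u=u and i=i, OF ui])
    then show "y = z" by (simp add: fun_eq_iff)
  qed
  moreover have "?\<phi> ` pts K \<subseteq> pts K"
    using a shear_pts[OF _ u ik] by (auto simp: pts_def)
  ultimately have "?\<phi> ` pts K = pts K" by (intro endo_inj_surj) (auto simp: finite_pts)
  with inj show ?thesis unfolding bij_betw_def by blast
qed

lemma wt_comp_bij:
  fixes \<phi> :: "(nat \<Rightarrow> 'a::zero) \<Rightarrow> nat \<Rightarrow> 'a"
  assumes bij: "bij_betw \<phi> (pts K) (pts K)"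
  shows "wt K (\<lambda>y. f (\<phi> y)) = wt K f"
proof -
  have img: "\<phi> ` pts K = pts K" using bij by (simp add: bij_betw_def)
  have "\<phi> ` supp K (\<lambda>y. f (\<phi> y)) = supp K f"
  proof (intro equalityI subsetI)
    fix x assume x: "x \<in> supp K f"
    then obtain y where "y \<in> pts K" "x = \<phi> y" using img by (auto simp: supp_def)
    then show "x \<in> \<phi> ` supp K (\<lambda>y. f (\<phi> y))" using x by (auto simp: supp_def)
  qed (use img in \<open>auto simp: supp_def\<close>)
  then have "bij_betw \<phi> (supp K (\<lambda>y. f (\<phi> y))) (supp K f)"
    by (intro bij_betw_subset[OF bij]) (auto simp: supp_def)
  then show ?thesis unfolding wt_def by (rule bij_betw_same_card)
qed

lemma in_flat_affine_shear:
  fixes f :: "(nat \<Rightarrow> 'a::{finite,field}) \<Rightarrow> 'a" and a u :: "nat \<Rightarrow> 'a"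
  assumes a: "a \<in> pts K" and u: "u \<in> pts K" and ik: "i < K" "k < K" and ui: "u i \<noteq> 0"
    and flat: "in_flat K N (supp K (\<lambda>y. f (\<lambda>n. a n + shear i k u y n)))"
  shows "in_flat K N (supp K f)"
proof -
  let ?\<phi> = "\<lambda>y n. a n + shear i k u y n"
  have bij: "bij_betw ?\<phi> (pts K) (pts K)" by (rule bij_affine_shear[OF a u ik ui])
  obtain a' v where a': "a' \<in> pts K" and v: "\<forall>j. v j \<in> pts K" and ind: "indep N v"
    and sub: "supp K (\<lambda>y. f (?\<phi> y)) \<subseteq> aff a' v N"
    using flat unfolding in_flat_def by blast
  define v' where "v' j = shear i k u (v j)" for j
  have "?\<phi> a' \<in> pts K" using bij a' unfolding bij_betw_def by blast
  moreover have "\<forall>j. v' j \<in> pts K" unfolding v'_def using shear_pts[OF _ u ik] v by blast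
  moreover have "indep N v'"
    unfolding indep_def
  proof (intro allI impI)
    fix c j assume "\<forall>n. (\<Sum>j<N. c j * v' j n) = 0" and "j < N"
    then have "shear i k u (\<lambda>n. \<Sum>j<N. c j * v j n) = (\<lambda>_. 0)"
      unfolding fun_eq_iff shear_sum v'_def by simp
    then have "\<forall>n. (\<Sum>j<N. c j * v j n) = 0"
      using shear_eq_0[where u=u and i=i, OF ui] by (simp add: fun_eq_iff)
    then show "c j = 0" using ind \<open>j < N\<close> unfolding indep_def by blast
  qed
  moreover have "supp K f \<subseteq> aff (?\<phi> a') v' N"
  proof
    fix x assume x: "x \<in> supp K f"
    then obtain y where y: "y \<in> pts K" "x = ?\<phi> y"
      using bij unfolding bij_betw_def supp_def by blast
    then have "y \<in> aff a' v N" using sub x by (auto simp: supp_def)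
    then obtain c where c: "y = (\<lambda>n. a' n + (\<Sum>j<N. c j * v j n))" unfolding aff_def by blast
    have "x = (\<lambda>n. ?\<phi> a' n + (\<Sum>j<N. c j * v' j n))"
      unfolding y(2) c v'_def shear_linear by (simp add: add.assoc)
    then show "x \<in> aff (?\<phi> a') v' N" unfolding aff_def by blast
  qed
  ultimately show ?thesis unfolding in_flat_def by blast
qed

(* Normalization: a function of weight \<ge> 2 can be changed by an affine bijection (without
   changing degree or weight) so that it is nonzero at 0 and at e_k; it suffices to prove the
   flatness of the support for the normalized function. *)
lemma affine_normalization:
  fixes f :: "(nat \<Rightarrow> 'a::{finite,field}) \<Rightarrow> 'a"
  assumes f: "poly_fun (Suc k) r f" and two: "2 \<le> wt (Suc k) f"
  obtains f' :: "(nat \<Rightarrow> 'a) \<Rightarrow> 'a" where "poly_fun (Suc k) r f'" "wt (Suc k) f' = wt (Suc k) f"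
    "f' (\<lambda>_. 0) \<noteq> 0" "f' ((\<lambda>_. 0)(k := 1)) \<noteq> 0"
    "\<forall>n. in_flat (Suc k) n (supp (Suc k) f') \<longrightarrow> in_flat (Suc k) n (supp (Suc k) f)"
proof -
  obtain a b where ab: "a \<in> supp (Suc k) f" "b \<in> supp (Suc k) f" "a \<noteq> b"
  proof -
    have "\<not> card (supp (Suc k) f) \<le> Suc 0" using two unfolding wt_def by simp
    then show ?thesis using that card_le_Suc0_iff_eq[OF finite_supp] by blast
  qed
  define u where "u n = b n - a n" for n
  have a: "a \<in> pts (Suc k)" and u: "u \<in> pts (Suc k)" using ab by (auto simp: u_def supp_def pts_def)
  obtain i where "a i \<noteq> b i" using ab(3) by (auto simp: fun_eq_iff)
  then have ui: "u i \<noteq> 0" by (simp add: u_def)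
  then have i: "i < Suc k" using u by (cases "i < Suc k") (auto simp: pts_def)
  let ?\<phi> = "\<lambda>y n. a n + shear i k u y n"
  have pf: "poly_fun (Suc k) r (\<lambda>y. f (?\<phi> y))"
    by (rule poly_fun_comp[OF f]) (use poly_fun_shear[OF _ i] in blast)
  have wtf: "wt (Suc k) (\<lambda>y. f (?\<phi> y)) = wt (Suc k) f"
    by (rule wt_comp_bij[OF bij_affine_shear[OF a u i _ ui]]) simp
  have flat: "in_flat (Suc k) n (supp (Suc k) f)"
    if "in_flat (Suc k) n (supp (Suc k) (\<lambda>y. f (?\<phi> y)))" for n
    using in_flat_affine_shear[OF a u i _ ui that] by simp
  show ?thesis
  proof (rule that[OF pf wtf])
    have "?\<phi> (\<lambda>_. 0) = a" and "?\<phi> ((\<lambda>_. 0)(k := 1)) = b"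
      by (simp_all add: shear_0 shear_unit u_def)
    then show "f (?\<phi> (\<lambda>_. 0)) \<noteq> 0" and "f (?\<phi> ((\<lambda>_. 0)(k := 1))) \<noteq> 0"
      using ab by (simp_all add: supp_def)
  qed (use flat in blast)
qed

lemma in_flat_wt_1:
  fixes f :: "(nat \<Rightarrow> 'a::{finite,field}) \<Rightarrow> 'a"
  assumes "wt k f = 1"
  shows "in_flat k 0 (supp k f)"
proof -
  obtain p where "supp k f = {p}" using assms unfolding wt_def by (auto simp: card_1_singleton_iff)
  then show ?thesis by (intro in_flat_singleton[of p]) (auto simp: supp_def)
qed

lemma fib_ge_2:
  assumes "f (\<lambda>_. 0) \<noteq> 0" and "f ((\<lambda>_. 0)(k := 1)) \<noteq> 0"
  shows "2 \<le> fib f k (\<lambda>_. 0::'a::{finite,field})"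
proof -
  have "{0::'a, 1} \<subseteq> {y. f ((\<lambda>_. 0)(k := y)) \<noteq> 0}"
    using assms by (auto simp: fun_upd_idem)
  then have "card {0::'a, 1} \<le> fib f k (\<lambda>_. 0)" unfolding fib_def by (intro card_mono) auto
  then show ?thesis by simp
qed

(* The fibre over 0 has at least two points,
   which forces d \<le> q - 2, and then d > s would make the weight strictly larger. *)
lemma tight_decomposition:
  fixes f :: "(nat \<Rightarrow> 'a::{finite,field}) \<Rightarrow> 'a"
  assumes f: "poly_fun (Suc k) r f" and r: "r = t * (CARD('a) - 1) + s" and s: "s < CARD('a) - 1"
    and tk: "t \<le> k" and f0: "f (\<lambda>_. 0) \<noteq> 0" and f1: "f ((\<lambda>_. 0)(k := 1)) \<noteq> 0"
    and tight: "wt (Suc k) f = min_wt CARD('a) (Suc k) r"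
  obtains d and g :: "(nat \<Rightarrow> 'a) \<Rightarrow> 'a" where "d \<le> s" "poly_fun k (r - d) g"
    "wt k g = min_wt CARD('a) k (r - d)" "\<forall>x\<in>pts k - supp k g. fib f k x = 0"
proof -
  let ?q = "CARD('a)"
  have q2: "2 \<le> ?q" by (rule card_field_ge2)
  have "(\<lambda>_. 0) \<in> supp (Suc k) f" using f0 by (simp add: supp_def pts_def)
  then obtain d g where d: "d < ?q" "d \<le> r" and g: "poly_fun k (r - d) g" "supp k g \<noteq> {}"
    and fb: "\<forall>x\<in>supp k g. ?q - d \<le> fib f k x"
    using leading_coeff_decomposition[OF f] by blast
  have step: "min_wt ?q (Suc k) r \<le> (?q - d) * min_wt ?q k (r - d)"
    by (rule min_wt_step[OF q2 s r d])
  have lower: "(?q - d) * min_wt ?q k (r - d) \<le> (?q - d) * wt k g"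
    using min_weight_bound[OF g] by simp
  have count: "(?q - d) * wt k g \<le> wt (Suc k) f" using fibre_count[OF fb] by simp
  have eq: "wt (Suc k) f = (?q - d) * min_wt ?q k (r - d)" and "wt (Suc k) f = (?q - d) * wt k g"
    using step lower count tight by linarith+
  then have wtg: "wt k g = min_wt ?q k (r - d)" using d by simp
  have fib_out: "\<forall>x\<in>pts k - supp k g. fib f k x = 0"
    and fib_in: "\<forall>x\<in>supp k g. fib f k x = ?q - d"
    using fibre_count_tight[OF fb] eq wtg by simp_all
  have "(\<lambda>_. 0) \<in> supp k g"
  proof (rule ccontr)
    assume "(\<lambda>_. 0) \<notin> supp k g"
    moreover have "(\<lambda>_. 0) \<in> pts k" by (simp add: pts_def)
    ultimately have "fib f k (\<lambda>_. 0) = 0" using fib_out by blast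
    then show False using fib_ge_2[OF f0 f1] by simp
  qed
  then have "fib f k (\<lambda>_. 0) = ?q - d" using fib_in by blast
  then have d2: "d + 2 \<le> ?q" using fib_ge_2[OF f0 f1] by simp
  have "d \<le> s"
  proof (rule ccontr)
    assume "\<not> d \<le> s"
    then obtain t' where t': "t = Suc t'" using r d by (cases t) auto
    then have "min_wt ?q (Suc k) r < (?q - d) * min_wt ?q k (r - d)"
      using min_wt_step_high(2)[OF q2 s _ d(1) d2] \<open>\<not> d \<le> s\<close> tk r by simp
    then show False using eq tight by simp
  qed
  then show ?thesis using that g(1) wtg fib_out by blast
qed

theorem min_weight_support_in_flat:
  fixes f :: "(nat \<Rightarrow> 'a::{finite,field}) \<Rightarrow> 'a"
  assumes "poly_fun k r f" and "r = t * (CARD('a) - 1) + s" and "s < CARD('a) - 1"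
    and "wt k f = min_wt CARD('a) k r"
  shows "in_flat k (k - t) (supp k f)"
  using assms
proof (induction k arbitrary: r s f)
  case 0
  then have "wt 0 f = 1" using min_wt_eq[OF 0(3), of 0 t] by simp
  then show ?case using in_flat_wt_1[of 0 f] by simp
next
  case (Suc k)
  let ?q = "CARD('a)"
  have mw: "min_wt ?q (Suc k) r = (if Suc k \<le> t then 1 else (?q - s) * ?q ^ (k - t))"
    using min_wt_eq[OF Suc.prems(3), of "Suc k" t] Suc.prems(2) by simp
  show ?case
  proof (cases "Suc k \<le> t")
    case True
    then have "wt (Suc k) f = 1" using Suc.prems(4) mw by simp
    then show ?thesis using in_flat_wt_1[of "Suc k" f] True by simp
  next
    case False
    then have tk: "t \<le> k" by simp
    have "2 \<le> ?q - s" using Suc.prems(3) by simp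
    also have "\<dots> \<le> (?q - s) * ?q ^ (k - t)" using card_field_ge2[where 'a='a] by simp
    finally have two: "2 \<le> wt (Suc k) f" using Suc.prems(4) mw False by simp
    obtain f' :: "(nat \<Rightarrow> 'a) \<Rightarrow> 'a" where f': "poly_fun (Suc k) r f'" "wt (Suc k) f' = wt (Suc k) f"
      "f' (\<lambda>_. 0) \<noteq> 0" "f' ((\<lambda>_. 0)(k := 1)) \<noteq> 0"
      "\<forall>n. in_flat (Suc k) n (supp (Suc k) f') \<longrightarrow> in_flat (Suc k) n (supp (Suc k) f)"
      by (rule affine_normalization[OF Suc.prems(1) two])
    have tight: "wt (Suc k) f' = min_wt ?q (Suc k) r" using f'(2) Suc.prems(4) by simp
    obtain d g where ds: "d \<le> s" and g: "poly_fun k (r - d) g" "wt k g = min_wt ?q k (r - d)"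
      and fib0: "\<forall>x\<in>pts k - supp k g. fib f' k x = 0"
      by (rule tight_decomposition[OF f'(1) Suc.prems(2,3) tk f'(3,4) tight])
    have "r - d = t * (?q - 1) + (s - d)" and "s - d < ?q - 1" using Suc.prems(2,3) ds by auto
    then have "in_flat k (k - t) (supp k g)" by (rule Suc.IH[OF g(1) _ _ g(2)])
    then have "in_flat (Suc k) (Suc (k - t)) (supp (Suc k) f')" by (rule in_flat_cylinder[OF _ fib0])
    then show ?thesis using f'(5) tk by (simp add: Suc_diff_le)
  qed
qed

lemma bij_restrict_enum:
  fixes \<iota> :: "'m::finite \<Rightarrow> nat"
  assumes \<iota>: "bij_betw \<iota> UNIV {..<CARD('m)}"
  shows "bij_betw (\<lambda>y i. y (\<iota> i)) (pts CARD('m) :: (nat \<Rightarrow> 'a::zero) set) UNIV"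
proof (rule bij_betw_imageI)
  have \<iota>_inv: "n < CARD('m) \<Longrightarrow> \<iota> (inv_into UNIV \<iota> n) = n" for n
    using bij_betw_inv_into_right[OF \<iota>] by simp
  show "inj_on (\<lambda>y i. y (\<iota> i)) (pts CARD('m) :: (nat \<Rightarrow> 'a) set)"
  proof (rule inj_onI, rule ext)
    fix y z :: "nat \<Rightarrow> 'a" and n
    assume y: "y \<in> pts CARD('m)" and z: "z \<in> pts CARD('m)" and eq: "(\<lambda>i. y (\<iota> i)) = (\<lambda>i. z (\<iota> i))"
    show "y n = z n"
    proof (cases "n < CARD('m)")
      case True
      then show ?thesis using fun_cong[OF eq, of "inv_into UNIV \<iota> n"] \<iota>_inv by simp
    qed (use y z in \<open>simp add: pts_def\<close>)
  qed
  show "(\<lambda>y i. y (\<iota> i)) ` (pts CARD('m) :: (nat \<Rightarrow> 'a) set) = UNIV"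
  proof (intro equalityI subsetI)
    fix x :: "'m \<Rightarrow> 'a"
    have "\<iota> i < CARD('m)" for i using \<iota> by (auto simp: bij_betw_def)
    moreover have "inv_into UNIV \<iota> (\<iota> i) = i" for i using \<iota> by (simp add: bij_betw_def)
    ultimately have "x = (\<lambda>i. (\<lambda>n. if n < CARD('m) then x (inv_into UNIV \<iota> n) else 0) (\<iota> i))" by simp
    moreover have "(\<lambda>n. if n < CARD('m) then x (inv_into UNIV \<iota> n) else 0) \<in> pts CARD('m)"
      by (simp add: pts_def)
    ultimately show "x \<in> (\<lambda>y i. y (\<iota> i)) ` pts CARD('m)" by (rule image_eqI)
  qed simp
qed

lemma poly_fun_RM:
  fixes f :: "('m::finite \<Rightarrow> 'a::{finite,field}) \<Rightarrow> 'a" and \<iota> :: "'m \<Rightarrow> nat"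
  assumes \<iota>: "bij_betw \<iota> UNIV {..<CARD('m)}" and f: "f \<in> RM r"
  shows "poly_fun CARD('m) r (\<lambda>y. f (\<lambda>i. y (\<iota> i)))"
proof -
  obtain c where c: "\<And>x. f x = (\<Sum>e\<in>reduced_exps CARD('a) r. c e * (\<Prod>i\<in>UNIV. x i ^ e i))"
    using f unfolding RM_def by blast
  have \<iota>_lt: "\<iota> i < CARD('m)" for i using \<iota> by (auto simp: bij_betw_def)
  have "poly_fun CARD('m) r (\<lambda>y. c e * (\<Prod>i\<in>UNIV. y (\<iota> i) ^ e i))"
    if e: "e \<in> reduced_exps CARD('a) r" for e
  proof -
    have "poly_fun CARD('m) (\<Sum>i\<in>UNIV. e i) (\<lambda>y. \<Prod>i\<in>UNIV. y (\<iota> i) ^ e i)"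
      by (rule poly_fun_prod) (auto intro: poly_fun_power \<iota>_lt)
    moreover have "(\<Sum>i\<in>UNIV. e i) \<le> r" using e unfolding reduced_exps_def by simp
    ultimately show ?thesis using poly_fun.mult[OF poly_fun.const[of _ 0 "c e"]] by simp
  qed
  then show ?thesis unfolding c by (intro poly_fun_sum) blast
qed

lemma wt_restrict_enum:
  fixes f :: "('m::finite \<Rightarrow> 'a::{finite,field}) \<Rightarrow> 'a" and \<iota> :: "'m \<Rightarrow> nat"
  assumes \<iota>: "bij_betw \<iota> UNIV {..<CARD('m)}"
  shows "wt CARD('m) (\<lambda>y. f (\<lambda>i. y (\<iota> i))) = weight f"
proof -
  let ?R = "\<lambda>y i. y (\<iota> i)"
  have bij: "bij_betw ?R (pts CARD('m) :: (nat \<Rightarrow> 'a) set) UNIV" by (rule bij_restrict_enum[OF \<iota>])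
  have "?R ` supp CARD('m) (\<lambda>y. f (?R y)) = support f"
  proof (intro equalityI subsetI)
    fix x assume x: "x \<in> support f"
    obtain y where "y \<in> pts CARD('m)" "x = ?R y" using bij unfolding bij_betw_def by blast
    then show "x \<in> ?R ` supp CARD('m) (\<lambda>y. f (?R y))" using x by (auto simp: supp_def support_def)
  qed (auto simp: supp_def support_def)
  then have "bij_betw ?R (supp CARD('m) (\<lambda>y. f (?R y))) (support f)"
    by (intro bij_betw_subset[OF bij]) (auto simp: supp_def)
  then show ?thesis unfolding wt_def weight_def by (rule bij_betw_same_card)
qed

lemma affine_subspace_from_flat:
  fixes f :: "('m::finite \<Rightarrow> 'a::{finite,field}) \<Rightarrow> 'a" and \<iota> :: "'m \<Rightarrow> nat"
  assumes \<iota>: "bij_betw \<iota> UNIV {..<CARD('m)}" and t: "t \<le> CARD('m)"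
    and flat: "in_flat CARD('m) (CARD('m) - t) (supp CARD('m) (\<lambda>y. f (\<lambda>i. y (\<iota> i))))"
  shows "\<exists>A. affine_subspace_codim t A \<and> support f \<subseteq> A"
proof -
  let ?m = "CARD('m)"
  obtain a v where v: "\<forall>j. v j \<in> pts ?m" and ind: "indep (?m - t) v"
    and sub: "supp ?m (\<lambda>y. f (\<lambda>i. y (\<iota> i))) \<subseteq> aff a v (?m - t)"
    using flat unfolding in_flat_def by blast
  have bij: "bij_betw (\<lambda>y i. y (\<iota> i)) (pts ?m :: (nat \<Rightarrow> 'a) set) UNIV"
    by (rule bij_restrict_enum[OF \<iota>])
  define A where "A = {x. \<exists>c :: nat \<Rightarrow> 'a. x = (\<lambda>i. a (\<iota> i) + (\<Sum>j<?m - t. c j * v j (\<iota> i)))}"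
  have inj: "inj_on (\<lambda>y i. y (\<iota> i)) (pts ?m :: (nat \<Rightarrow> 'a) set)"
    using bij by (simp add: bij_betw_def)
  have ind': "\<forall>c :: nat \<Rightarrow> 'a. (\<forall>i. (\<Sum>j<?m - t. c j * v j (\<iota> i)) = 0) \<longrightarrow> (\<forall>j<?m - t. c j = 0)"
  proof (intro allI impI)
    fix c :: "nat \<Rightarrow> 'a" and j
    assume h: "\<forall>i. (\<Sum>j<?m - t. c j * v j (\<iota> i)) = 0" and j: "j < ?m - t"
    have "(\<lambda>i. (\<Sum>j<?m - t. c j * v j (\<iota> i))) = (\<lambda>i. (\<lambda>n. 0) (\<iota> i))" using h by simp
    moreover have "(\<lambda>n. \<Sum>j<?m - t. c j * v j n) \<in> pts ?m" "(\<lambda>n. 0) \<in> pts ?m"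
      using v by (auto simp: pts_def)
    ultimately have "(\<lambda>n. \<Sum>j<?m - t. c j * v j n) = (\<lambda>n. 0)"
      by (rule inj_onD[OF inj])
    then show "c j = 0" using ind j unfolding indep_def by (simp add: fun_eq_iff)
  qed
  have "affine_subspace_codim t A"
    unfolding affine_subspace_codim_def A_def
    by (intro conjI exI[of _ "\<lambda>i. a (\<iota> i)"] exI[of _ "\<lambda>j i. v j (\<iota> i)"]) (use t ind' in simp_all)
  moreover have "support f \<subseteq> A"
  proof
    fix x assume x: "x \<in> support f"
    obtain y where y: "y \<in> pts ?m" "x = (\<lambda>i. y (\<iota> i))" using bij unfolding bij_betw_def by blast
    then have "y \<in> aff a v (?m - t)" using sub x by (auto simp: supp_def support_def)
    then obtain c where "y = (\<lambda>n. a n + (\<Sum>j<?m - t. c j * v j n))" unfolding aff_def by blast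
    then show "x \<in> A" unfolding A_def y(2) by auto
  qed
  ultimately show ?thesis by blast
qed

(* The weight hypothesis says that f has minimum weight min_wt q m r. *)
theorem mainTheorem2:
  fixes f :: "('m::finite \<Rightarrow> 'a::{finite,field}) \<Rightarrow> 'a"
    and p n t s r :: nat
  assumes "prime p" and "CARD('a) = p ^ n"
    and "s \<le> CARD('a) - 2"
    and "r = t * (CARD('a) - 1) + s"
    and "r < CARD('m) * (CARD('a) - 1)"
    and "f \<in> RM r" and "f \<noteq> (\<lambda>_. 0)"
    and "weight f = (CARD('a) - s) * CARD('a) ^ (CARD('m) - t - 1)"
  shows "\<exists>A. affine_subspace_codim t A \<and> support f \<subseteq> A"
proof -
  let ?q = "CARD('a)" and ?m = "CARD('m)"
  obtain \<iota> :: "'m \<Rightarrow> nat" where \<iota>: "bij_betw \<iota> UNIV {..<?m}"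
    using ex_bij_betw_finite_nat[of "UNIV :: 'm set"] by (auto simp: atLeast0LessThan)
  have s: "s < ?q - 1" using assms(3) card_field_ge2[where 'a='a] by linarith
  have tm: "t < ?m"
  proof (rule ccontr)
    assume "\<not> t < ?m"
    then have "?m * (?q - 1) \<le> t * (?q - 1)" by simp
    then show False using assms(4,5) by linarith
  qed
  have "wt ?m (\<lambda>y. f (\<lambda>i. y (\<iota> i))) = min_wt ?q ?m r"
    using wt_restrict_enum[OF \<iota>, of f] assms(4,8) min_wt_eq[OF s, of ?m t] tm by simp
  then have "in_flat ?m (?m - t) (supp ?m (\<lambda>y. f (\<lambda>i. y (\<iota> i))))"
    by (rule min_weight_support_in_flat[OF poly_fun_RM[OF \<iota> assms(6)] assms(4) s])
  then show ?thesis by (rule affine_subspace_from_flat[OF \<iota> less_imp_le[OF tm]])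
qed

end
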